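(* Let $r\ge3$, $n>r$. For $1\le i<r$ let $\tau'(T_{s_i}):V_\omega\to V_\omega$ be the action of $vF_iE_i-1$, let $\tau'(T_{\rho^{-1}})$ be the action of $(F_nF_{n-1}\cdots F_{r+1})(F_1F_2\cdots F_r)$, and let $\tau'(T_\rho)$ be the action of $(E_rE_{r+1}\cdots E_{n-1})(E_{r-1}E_{r-2}\cdots E_1)E_n$, all restricted to $V_\omega$. Then $\tau'(T_\rho)$ and $\tau'(T_{\rho^{-1}})$ are mutually inverse, and, writing $q=v^2$: (1') $\tau'(T_{s_i})^2=(q-1)\tau'(T_{s_i})+q$ for $1\le i\le r-1$; (2') $\tau'(T_{s_i})\tau'(T_{s_j})=\tau'(T_{s_j})\tau'(T_{s_i})$ if $|i-j|>1$; (3') $\tau'(T_{s_i})\tau'(T_{s_j})\tau'(T_{s_i})=\tau'(T_{s_j})\tau'(T_{s_i})\tau'(T_{s_j})$ if $|i-j|=1$; (4') $\tau'(T_\rho)\tau'(T_{s_{i+1}})\tau'(T_\rho)^{-1}=\tau'(T_{s_i})$ for $1\le i<r-1$; (5') $\tau'(T_\rho)^r\tau'(T_{s_i})\tau'(T_\rho)^{-r}=\tau'(T_{s_i})$ for $1\le i\le r-1$.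
   Context: $V$ is the $\mathbb{Q}(v)$-space with basis $e_t$ ($t\in\mathbb{Z}$), with $E_ie_{t+1}=e_t$ if $i\equiv t\pmod n$ (else $0$), $F_ie_t=e_{t+1}$ if $i\equiv t\pmod n$ (else $0$), $K_ie_t=ve_t$ if $i\equiv t \pmod n$ (else $e_t$), $1\le i\le n$; these act on $V^{\otimes r}$ via iterated $\Delta(E_i)=E_i\otimes K_iK_{i+1}^{-1}+1\otimes E_i$, $\Delta(F_i)=K_i^{-1}K_{i+1}\otimes F_i+F_i\otimes1$, $\Delta(K_i^{\pm1})=K_i^{\pm1}\otimes K_i^{\pm1}$ (indices mod $n$). A basis tensor $e_{t_1}\otimes\cdots\otimes e_{t_r}$ has weight $\lambda$ with $\lambda_i=|\{j:t_j\equiv i\pmod n\}|$; $V_\omega$ is the span of basis tensors of weight $\omega=(1^r,0^{n-r})$. *)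

theory Defs
  imports "HOL-Computational_Algebra.Polynomial" "HOL-Computational_Algebra.Fraction_Field"
          "HOL-Number_Theory.Cong"
begin

type_synonym qv = "rat poly fract"

definition vv :: qv where "vv = Fract [:0, 1:] 1"

text \<open>Vectors of V (basis e_t, t in Z) are functions int => qv (finitely supported);
  vectors of tensor powers of V are functions on basis tensors, i.e. int lists.\<close>
type_synonym tvec = "int list \<Rightarrow> qv"

definition bas1 :: "int \<Rightarrow> int \<Rightarrow> qv" where
  "bas1 t = (\<lambda>s. if s = t then 1 else 0)"

definition bas :: "int list \<Rightarrow> tvec" where
  "bas ts = (\<lambda>u. if u = ts then 1 else 0)"

definition tens :: "(int \<Rightarrow> qv) \<Rightarrow> tvec \<Rightarrow> tvec" where
  "tens a b = (\<lambda>u. case u of [] \<Rightarrow> 0 | s # us \<Rightarrow> a s * b us)"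

definition E1 :: "nat \<Rightarrow> int \<Rightarrow> int \<Rightarrow> int \<Rightarrow> qv" where
  "E1 n i t = (\<lambda>s. if [i = t - 1] (mod int n) \<and> s = t - 1 then 1 else 0)"

definition F1 :: "nat \<Rightarrow> int \<Rightarrow> int \<Rightarrow> int \<Rightarrow> qv" where
  "F1 n i t = (\<lambda>s. if [i = t] (mod int n) \<and> s = t + 1 then 1 else 0)"

definition K1 :: "nat \<Rightarrow> int \<Rightarrow> int \<Rightarrow> qv" where
  "K1 n i t = (if [i = t] (mod int n) then vv else 1)"

definition K1inv :: "nat \<Rightarrow> int \<Rightarrow> int \<Rightarrow> qv" where
  "K1inv n i t = (if [i = t] (mod int n) then inverse vv else 1)"

text \<open>Delta(K^(+-1)) = K^(+-1) (x) K^(+-1): diagonal action on basis tensors.\<close>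
fun Kt :: "nat \<Rightarrow> int \<Rightarrow> int list \<Rightarrow> qv" where
  "Kt n i [] = 1"
| "Kt n i (t # ts) = K1 n i t * Kt n i ts"

fun Ktinv :: "nat \<Rightarrow> int \<Rightarrow> int list \<Rightarrow> qv" where
  "Ktinv n i [] = 1"
| "Ktinv n i (t # ts) = K1inv n i t * Ktinv n i ts"

text \<open>Iterated coproduct, Delta^(k+1) = (1 (x) Delta^(k)) o Delta, applied to basis tensors:
  Delta(E_i) = E_i (x) K_i K_(i+1)^(-1) + 1 (x) E_i,
  Delta(F_i) = K_i^(-1) K_(i+1) (x) F_i + F_i (x) 1.\<close>
fun Et :: "nat \<Rightarrow> int \<Rightarrow> int list \<Rightarrow> tvec" where
  "Et n i [] = (\<lambda>_. 0)"
| "Et n i (t # ts) = (\<lambda>u.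
      tens (E1 n i t) (\<lambda>w. (Kt n i ts * Ktinv n (i + 1) ts) * bas ts w) u
    + tens (bas1 t) (Et n i ts) u)"

fun Ft :: "nat \<Rightarrow> int \<Rightarrow> int list \<Rightarrow> tvec" where
  "Ft n i [] = (\<lambda>_. 0)"
| "Ft n i (t # ts) = (\<lambda>u.
      tens (\<lambda>s. (K1inv n i t * K1 n (i + 1) t) * bas1 t s) (Ft n i ts) u
    + tens (F1 n i t) (bas ts) u)"

definition lin :: "(int list \<Rightarrow> tvec) \<Rightarrow> tvec \<Rightarrow> tvec" where
  "lin X f = (\<lambda>u. \<Sum>w\<in>{w. f w \<noteq> 0}. f w * X w u)"

datatype gen = GE int | GF int

fun gen_op :: "nat \<Rightarrow> gen \<Rightarrow> tvec \<Rightarrow> tvec" where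
  "gen_op n (GE i) = lin (Et n i)"
| "gen_op n (GF i) = lin (Ft n i)"

text \<open>Action of a word g_1 g_2 ... g_k (g_k acts first).\<close>
definition word_op :: "nat \<Rightarrow> gen list \<Rightarrow> tvec \<Rightarrow> tvec" where
  "word_op n gs = foldr (\<lambda>g acc. gen_op n g \<circ> acc) gs id"

definition Ts :: "nat \<Rightarrow> nat \<Rightarrow> tvec \<Rightarrow> tvec" where
  "Ts n i f = (\<lambda>u. vv * word_op n [GF (int i), GE (int i)] f u - f u)"

definition Trhoinv :: "nat \<Rightarrow> nat \<Rightarrow> tvec \<Rightarrow> tvec" where
  "Trhoinv n r = word_op n (map (\<lambda>k. GF (int k)) (rev [r+1..<n+1]) @ map (\<lambda>k. GF (int k)) [1..<r+1])"

definition Trho :: "nat \<Rightarrow> nat \<Rightarrow> tvec \<Rightarrow> tvec" where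
  "Trho n r = word_op n (map (\<lambda>k. GE (int k)) [r..<n] @ map (\<lambda>k. GE (int k)) (rev [1..<r]) @ [GE (int n)])"

definition wt :: "nat \<Rightarrow> int list \<Rightarrow> nat \<Rightarrow> nat" where
  "wt n w i = card {j. j < length w \<and> [w ! j = int i] (mod int n)}"

definition Vomega :: "nat \<Rightarrow> nat \<Rightarrow> tvec \<Rightarrow> bool" where
  "Vomega n r f \<longleftrightarrow> finite {w. f w \<noteq> 0} \<and>
     (\<forall>w. f w \<noteq> 0 \<longrightarrow> length w = r \<and> (\<forall>i\<in>{1..n}. wt n w i = (if i \<le> r then 1 else 0)))"

end

(*
  On V_omega every basis tensor e_t1 (x) ... (x) e_tr has exactly one entry in each residue class
  1, ..., r mod n and none in the others.  So E_k and F_k move at most one entry of such a tensor,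
  and the K-factors of the coproduct are powers of v that can be read off from the relative
  position of the entries with residues k and k + 1.  Consequently T_rho and its inverse permute
  the basis tensors (every entry moves down by one, the entry of residue 1 wrapping around to
  residue r), and

    T_si e_w = v e_(si w)                         if the entry of residue i precedes that of i + 1,
    T_si e_w = (v^2 - 1) e_w + v e_(si w)         otherwise,

  where si w raises the entry of residue i and lowers that of residue i + 1.  Every relation is
  then checked on basis tensors: the quadratic and the far commutation relations directly from
  this formula, the braid relation in each of the six relative orders of the residues i, i + 1,
  i + 2, the conjugation by T_rho because T_rho shifts residues cyclically, and the conjugation by
  T_rho^r because T_rho^-r translates every entry by n.
*)

theory Submission
  imports Defs
begin

section \<open>Residues\<close>

definition residue :: "nat \<Rightarrow> int \<Rightarrow> int" where
  "residue n t = (t - 1) mod int n + 1"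

lemma residue_eq_iff_cong: "residue n a = residue n b \<longleftrightarrow> [a = b] (mod int n)"
  unfolding residue_def cong_def
  by (metis add_right_cancel mod_diff_cong mod_add_cong diff_add_cancel)

lemma residue_bounds: "n > 0 \<Longrightarrow> 1 \<le> residue n t \<and> residue n t \<le> int n"
  unfolding residue_def by (simp add: add1_zle_eq)

lemma residue_eq_self: "1 \<le> t \<Longrightarrow> t \<le> int n \<Longrightarrow> residue n t = t"
  unfolding residue_def by simp

lemma residue_add: "residue n (t + c) = residue n (residue n t + c)"
  unfolding residue_def by (simp add: mod_simps algebra_simps)

lemma residue_eq_shift: "residue n t = residue n s \<Longrightarrow> residue n (t + c) = residue n (s + c)"
  by (metis residue_add)

lemma residue_add_eq:
  "1 \<le> residue n t + c \<Longrightarrow> residue n t + c \<le> int n \<Longrightarrow> residue n (t + c) = residue n t + c"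
  using residue_add[of n t c] residue_eq_self[of "residue n t + c" n] by simp

lemma residue_diff_eq:
  "1 \<le> residue n t - c \<Longrightarrow> residue n t - c \<le> int n \<Longrightarrow> residue n (t - c) = residue n t - c"
  using residue_add_eq[of n t "- c"] by simp

lemma residue_add_n: "residue n (t + int n) = residue n t"
proof -
  have "(t + int n - 1) mod int n = (t - 1 + int n) mod int n" by (simp add: algebra_simps)
  then show ?thesis unfolding residue_def by simp
qed

lemma residue_diff_n: "residue n (t - int n) = residue n t"
  using residue_add_n[of n "t - int n"] by simp

lemma residue_succ_n: "residue n (int n + 1) = 1"
  unfolding residue_def by simp

lemma residue_succ: "n > 0 \<Longrightarrow> residue n (t + 1) = (if residue n t = int n then 1 else residue n t + 1)"
  using residue_add[of n t 1] residue_bounds[of n t] residue_succ_n[of n]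
    residue_eq_self[of "residue n t + 1" n]
  by auto

lemma residue_pred: "n > 0 \<Longrightarrow> residue n (t - 1) = (if residue n t = 1 then int n else residue n t - 1)"
proof -
  assume n: "n > 0"
  have "residue n 0 = int n"
    using residue_add_n[of n 0] residue_eq_self[of "int n" n] n by simp
  then show ?thesis
    using residue_add[of n t "- 1"] residue_bounds[OF n, of t] residue_eq_self[of "residue n t - 1" n]
    by auto
qed


section \<open>Finitely supported vectors and linear operators\<close>

definition supp :: "tvec \<Rightarrow> int list set" where
  "supp f = {w. f w \<noteq> 0}"

definition finsupp :: "tvec \<Rightarrow> bool" where
  "finsupp f \<longleftrightarrow> finite (supp f)"

lemma supp_bas: "supp (bas w) = {w}"
  unfolding supp_def bas_def by auto

lemma finsupp_bas [simp]: "finsupp (bas w)"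
  unfolding finsupp_def supp_bas by simp

lemma finsupp_zero [simp]: "finsupp (\<lambda>u. 0)"
  unfolding finsupp_def supp_def by simp

lemma finsupp_lincomb [simp]: "finsupp f \<Longrightarrow> finsupp g \<Longrightarrow> finsupp (\<lambda>u. a * f u + b * g u)"
proof -
  have "supp (\<lambda>u. a * f u + b * g u) \<subseteq> supp f \<union> supp g"
    unfolding supp_def by auto
  then show "finsupp f \<Longrightarrow> finsupp g \<Longrightarrow> ?thesis"
    unfolding finsupp_def by (meson finite_Un finite_subset)
qed

lemma finsupp_add [simp]: "finsupp f \<Longrightarrow> finsupp g \<Longrightarrow> finsupp (\<lambda>u. f u + g u)"
  using finsupp_lincomb[of f g 1 1] by simp

lemma finsupp_scale [simp]: "finsupp f \<Longrightarrow> finsupp (\<lambda>u. a * f u)"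
  using finsupp_lincomb[of f f a 0] by simp

lemma finsupp_expansion: "finsupp f \<Longrightarrow> f = (\<lambda>u. \<Sum>w\<in>supp f. f w * bas w u)"
  unfolding finsupp_def supp_def bas_def by (auto simp: fun_eq_iff if_distrib cong: if_cong)

lemma lin_eq_sum: "supp f \<subseteq> A \<Longrightarrow> finite A \<Longrightarrow> lin X f u = (\<Sum>w\<in>A. f w * X w u)"
  unfolding lin_def supp_def by (rule sum.mono_neutral_left) auto

lemma lin_scale_bas [simp]: "lin X (\<lambda>u. c * bas w u) = (\<lambda>u. c * X w u)"
proof (rule ext)
  fix u
  have "supp (\<lambda>u. c * bas w u) \<subseteq> {w}"
    unfolding supp_def bas_def by auto
  then show "lin X (\<lambda>u. c * bas w u) u = c * X w u"
    by (subst lin_eq_sum) (auto simp: bas_def)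
qed

lemma lin_bas [simp]: "lin X (bas w) = X w"
  using lin_scale_bas[of X 1 w] by simp

lemma lin_lincomb:
  assumes "finsupp f" "finsupp g"
  shows "lin X (\<lambda>u. a * f u + b * g u) = (\<lambda>u. a * lin X f u + b * lin X g u)"
proof (rule ext)
  fix u
  let ?A = "supp f \<union> supp g"
  have A: "finite ?A" "supp f \<subseteq> ?A" "supp g \<subseteq> ?A" "supp (\<lambda>u. a * f u + b * g u) \<subseteq> ?A"
    using assms unfolding finsupp_def supp_def by auto
  then show "lin X (\<lambda>u. a * f u + b * g u) u = a * lin X f u + b * lin X g u"
    by (simp add: lin_eq_sum[OF _ A(1)] sum.distrib sum_distrib_left algebra_simps)
qed

lemma finsupp_lin: "finsupp f \<Longrightarrow> (\<And>w. finsupp (X w)) \<Longrightarrow> finsupp (lin X f)"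
proof -
  assume f: "finsupp f" and X: "\<And>w. finsupp (X w)"
  have "supp (lin X f) \<subseteq> (\<Union>w\<in>supp f. supp (X w))"
  proof
    fix u assume "u \<in> supp (lin X f)"
    then have "(\<Sum>w\<in>supp f. f w * X w u) \<noteq> 0"
      unfolding supp_def lin_def by simp
    then obtain w where "w \<in> supp f" "f w * X w u \<noteq> 0"
      by (meson sum.neutral)
    then show "u \<in> (\<Union>w\<in>supp f. supp (X w))"
      unfolding supp_def by auto
  qed
  moreover have "finite (\<Union>w\<in>supp f. supp (X w))"
    using f X unfolding finsupp_def by auto
  ultimately show ?thesis
    unfolding finsupp_def using finite_subset by blast
qed

definition linear_op :: "(tvec \<Rightarrow> tvec) \<Rightarrow> bool" where
  "linear_op P \<longleftrightarrow> (\<forall>f. finsupp f \<longrightarrow> finsupp (P f)) \<and>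
     (\<forall>f g a b. finsupp f \<longrightarrow> finsupp g \<longrightarrow> P (\<lambda>u. a * f u + b * g u) = (\<lambda>u. a * P f u + b * P g u))"

lemma linear_op_lincomb:
  "linear_op P \<Longrightarrow> finsupp f \<Longrightarrow> finsupp g \<Longrightarrow> P (\<lambda>u. a * f u + b * g u) = (\<lambda>u. a * P f u + b * P g u)"
  unfolding linear_op_def by blast

lemma linear_op_add:
  "linear_op P \<Longrightarrow> finsupp f \<Longrightarrow> finsupp g \<Longrightarrow> P (\<lambda>u. f u + g u) = (\<lambda>u. P f u + P g u)"
  using linear_op_lincomb[of P f g 1 1] by simp

lemma linear_op_zero: "linear_op P \<Longrightarrow> P (\<lambda>u. 0) = (\<lambda>u. 0)"
  using linear_op_lincomb[of P "\<lambda>u. 0" "\<lambda>u. 0" 0 0] by simp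

lemma linear_op_scale: "linear_op P \<Longrightarrow> finsupp f \<Longrightarrow> P (\<lambda>u. a * f u) = (\<lambda>u. a * P f u)"
  using linear_op_lincomb[of P f "\<lambda>u. 0" a 0] linear_op_zero[of P] by simp

lemma linear_op_lin: "(\<And>w. finsupp (X w)) \<Longrightarrow> linear_op (lin X)"
  unfolding linear_op_def using finsupp_lin lin_lincomb by blast

lemma linear_op_id: "linear_op (\<lambda>f. f)"
  unfolding linear_op_def by simp

lemma linear_op_comp: "linear_op P \<Longrightarrow> linear_op Q \<Longrightarrow> linear_op (\<lambda>f. P (Q f))"
  unfolding linear_op_def by simp

lemma linear_op_lincomb_op: "linear_op P \<Longrightarrow> linear_op Q \<Longrightarrow> linear_op (\<lambda>f u. a * P f u + b * Q f u)"
  unfolding linear_op_def by (auto simp: algebra_simps fun_eq_iff)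

lemma linear_op_funpow: "linear_op P \<Longrightarrow> linear_op (P ^^ k)"
  by (induction k)
    (simp_all add: linear_op_id[unfolded id_def[symmetric]] linear_op_comp[unfolded comp_def[symmetric]])

lemma linear_op_sum_bas:
  assumes "linear_op P" "finite S"
  shows "P (\<lambda>u. \<Sum>w\<in>S. c w * bas w u) = (\<lambda>u. \<Sum>w\<in>S. c w * P (bas w) u)"
  using assms(2)
proof (induction S rule: finite_induct)
  case empty
  then show ?case using linear_op_zero[OF assms(1)] by simp
next
  case (insert x S)
  have "supp (\<lambda>u. \<Sum>w\<in>S. c w * bas w u) \<subseteq> S"
    unfolding supp_def bas_def using insert(1) by (auto simp: if_distrib sum.delta' cong: if_cong)
  then have "finsupp (\<lambda>u. \<Sum>w\<in>S. c w * bas w u)"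
    unfolding finsupp_def using insert(1) finite_subset by blast
  then show ?case
    using insert linear_op_lincomb[OF assms(1), of "bas x" _ "c x" 1] by simp
qed

lemma linear_op_eq_on_basis:
  assumes P: "linear_op P" and Q: "linear_op Q" and f: "finsupp f"
    and PQ: "\<And>w. w \<in> supp f \<Longrightarrow> P (bas w) = Q (bas w)"
  shows "P f = Q f"
proof -
  have fin: "finite (supp f)" using f unfolding finsupp_def .
  have "P f = (\<lambda>u. \<Sum>w\<in>supp f. f w * P (bas w) u)"
    by (subst finsupp_expansion[OF f]) (rule linear_op_sum_bas[OF P fin])
  also have "\<dots> = (\<lambda>u. \<Sum>w\<in>supp f. f w * Q (bas w) u)"
    using PQ by simp
  also have "\<dots> = Q f"
    by (subst (2) finsupp_expansion[OF f]) (rule linear_op_sum_bas[OF Q fin, symmetric])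
  finally show ?thesis .
qed


section \<open>The generators on basis tensors\<close>

lemma word_op_Nil [simp]: "word_op n [] = id"
  unfolding word_op_def by simp

lemma word_op_Cons [simp]: "word_op n (g # gs) = gen_op n g \<circ> word_op n gs"
  unfolding word_op_def by simp

lemma word_op_append: "word_op n (gs @ hs) = word_op n gs \<circ> word_op n hs"
  by (induction gs) (simp_all add: word_op_def)

definition prepend :: "int \<Rightarrow> tvec \<Rightarrow> tvec" where
  "prepend t g = (\<lambda>u. case u of [] \<Rightarrow> 0 | s # us \<Rightarrow> (if s = t then g us else 0))"

lemma bas_Cons: "bas (t # ts) = prepend t (bas ts)"
  unfolding prepend_def bas_def by (auto simp: fun_eq_iff split: list.split)

lemma prepend_lincomb: "prepend t (\<lambda>u. a * f u + b * g u) = (\<lambda>u. a * prepend t f u + b * prepend t g u)"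
  unfolding prepend_def by (auto simp: fun_eq_iff split: list.split)

lemma prepend_scale: "prepend t (\<lambda>u. a * f u) = (\<lambda>u. a * prepend t f u)"
  unfolding prepend_def by (auto simp: fun_eq_iff split: list.split)

lemma prepend_zero: "prepend t (\<lambda>u. 0) = (\<lambda>u. 0)"
  unfolding prepend_def by (auto simp: fun_eq_iff split: list.split)

lemma finsupp_prepend [simp]: "finsupp g \<Longrightarrow> finsupp (prepend t g)"
proof -
  have "supp (prepend t g) \<subseteq> Cons t ` supp g"
  proof
    fix u assume "u \<in> supp (prepend t g)"
    then show "u \<in> Cons t ` supp g"
      unfolding supp_def prepend_def by (cases u) (auto split: if_splits)
  qed
  then show "finsupp g \<Longrightarrow> ?thesis"
    unfolding finsupp_def using finite_subset by blast
qed

lemma cong_iff_residue_eq: "[i = t] (mod int n) \<longleftrightarrow> residue n t = residue n i"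
  by (simp add: residue_eq_iff_cong cong_sym_eq)

lemma cong_pred_iff_residue_eq: "[i = t - 1] (mod int n) \<longleftrightarrow> residue n t = residue n (i + 1)"
  using cong_add_rcancel[of i 1 "t - 1" "int n"] by (simp add: residue_eq_iff_cong cong_sym_eq)

lemma K1_eq: "K1 n i t = (if residue n t = residue n i then vv else 1)"
  unfolding K1_def cong_iff_residue_eq ..

lemma K1inv_eq: "K1inv n i t = (if residue n t = residue n i then inverse vv else 1)"
  unfolding K1inv_def cong_iff_residue_eq ..

lemma Et_Cons: "Et n i (t # ts) = (\<lambda>u.
    (if residue n t = residue n (i + 1)
     then Kt n i ts * Ktinv n (i + 1) ts * bas ((t - 1) # ts) u else 0)
    + prepend t (Et n i ts) u)"
  by (auto simp: fun_eq_iff tens_def prepend_def E1_def bas1_def bas_def cong_pred_iff_residue_eq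
      split: list.split)

lemma Ft_Cons: "Ft n i (t # ts) = (\<lambda>u.
    K1inv n i t * K1 n (i + 1) t * prepend t (Ft n i ts) u
    + (if residue n t = residue n i then bas ((t + 1) # ts) u else 0))"
  by (auto simp: fun_eq_iff tens_def prepend_def F1_def bas1_def bas_def cong_iff_residue_eq
      split: list.split)

declare Et.simps(2) [simp del] Ft.simps(2) [simp del]

lemma finsupp_if [simp]: "finsupp f \<Longrightarrow> finsupp (\<lambda>u. if c then f u else 0)"
  by (cases c) simp_all

lemma finsupp_Et: "finsupp (Et n i w)"
  by (induction w) (simp_all add: Et_Cons)

lemma finsupp_Ft: "finsupp (Ft n i w)"
  by (induction w) (simp_all add: Ft_Cons)

lemma linear_op_gen_op: "linear_op (gen_op n g)"
  by (cases g) (simp_all add: linear_op_lin finsupp_Et finsupp_Ft)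

lemma linear_op_word_op: "linear_op (word_op n gs)"
  by (induction gs) (simp_all add: word_op_def linear_op_id
      linear_op_comp[OF linear_op_gen_op])

lemma linear_op_Ts: "linear_op (Ts n i)"
  using linear_op_lincomb_op[OF linear_op_word_op linear_op_id,
      of vv n "[GF (int i), GE (int i)]" "- 1"]
  by (simp add: Ts_def[abs_def])

lemma linear_op_Trho: "linear_op (Trho n r)"
  unfolding Trho_def by (rule linear_op_word_op)

lemma linear_op_Trhoinv: "linear_op (Trhoinv n r)"
  unfolding Trhoinv_def by (rule linear_op_word_op)


definition avoids :: "nat \<Rightarrow> int set \<Rightarrow> int list \<Rightarrow> bool" where
  "avoids n C xs \<longleftrightarrow> (\<forall>t\<in>set xs. residue n t \<notin> C)"

lemma avoids_simps [simp]:
  "avoids n C []"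
  "avoids n C (t # ts) \<longleftrightarrow> residue n t \<notin> C \<and> avoids n C ts"
  "avoids n C (xs @ ys) \<longleftrightarrow> avoids n C xs \<and> avoids n C ys"
  "avoids n (insert c (insert d D)) xs \<longleftrightarrow> avoids n {c} xs \<and> avoids n (insert d D) xs"
  unfolding avoids_def by auto

lemma Kt_avoids: "avoids n {residue n i} xs \<Longrightarrow> Kt n i xs = 1"
  by (induction xs) (simp_all add: K1_eq)

lemma Ktinv_avoids: "avoids n {residue n i} xs \<Longrightarrow> Ktinv n i xs = 1"
  by (induction xs) (simp_all add: K1inv_eq)

lemma Kt_append: "Kt n i (xs @ ys) = Kt n i xs * Kt n i ys"
  by (induction xs) simp_all

lemma Ktinv_append: "Ktinv n i (xs @ ys) = Ktinv n i xs * Ktinv n i ys"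
  by (induction xs) simp_all

lemma Et_avoids: "avoids n {residue n (i + 1)} w \<Longrightarrow> Et n i w = (\<lambda>u. 0)"
  by (induction w) (simp_all add: Et_Cons prepend_zero)

lemma Ft_avoids: "avoids n {residue n i} w \<Longrightarrow> Ft n i w = (\<lambda>u. 0)"
  by (induction w) (simp_all add: Ft_Cons prepend_zero)

lemma Et_single:
  assumes "avoids n {residue n (i + 1)} (xs @ ys)" "residue n a = residue n (i + 1)"
  shows "Et n i (xs @ a # ys) = (\<lambda>u. Kt n i ys * Ktinv n (i + 1) ys * bas (xs @ (a - 1) # ys) u)"
  using assms
  by (induction xs) (simp_all add: Et_Cons Et_avoids prepend_zero prepend_scale bas_Cons)

lemma Ft_single:
  assumes "avoids n {residue n i} (xs @ ys)" "residue n a = residue n i"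
  shows "Ft n i (xs @ a # ys) = (\<lambda>u. Ktinv n i xs * Kt n (i + 1) xs * bas (xs @ (a + 1) # ys) u)"
  using assms
  by (induction xs)
    (simp_all add: Ft_Cons Ft_avoids prepend_zero prepend_scale bas_Cons K1inv_eq algebra_simps)

lemma Ft_two:
  assumes "avoids n {residue n i} (xs @ ys @ zs)"
    and "residue n a = residue n i" "residue n b = residue n i"
  shows "Ft n i (xs @ a # ys @ b # zs) = (\<lambda>u.
      Ktinv n i xs * Kt n (i + 1) xs * bas (xs @ (a + 1) # ys @ b # zs) u
    + Ktinv n i (xs @ a # ys) * Kt n (i + 1) (xs @ a # ys) * bas (xs @ a # ys @ (b + 1) # zs) u)"
  using assms
proof (induction xs)
  case Nil
  then show ?case
    by (simp add: Ft_Cons Ft_single[of n i ys zs b] prepend_scale bas_Cons K1inv_eq algebra_simps)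
next
  case (Cons x xs)
  then show ?case
    by (simp add: Ft_Cons prepend_lincomb prepend_scale bas_Cons K1inv_eq algebra_simps)
qed


section \<open>The action of \<open>v F\<^sub>i E\<^sub>i - 1\<close> on basis tensors\<close>

definition occurs_once :: "nat \<Rightarrow> int \<Rightarrow> int list \<Rightarrow> bool" where
  "occurs_once n c w \<longleftrightarrow> length (filter (\<lambda>t. residue n t = c) w) = 1"

lemma filter_residue_avoids: "avoids n {c} xs \<Longrightarrow> filter (\<lambda>t. residue n t = c) xs = []"
  unfolding avoids_def by (simp add: filter_empty_conv)

lemma occurs_once_split:
  assumes "occurs_once n c w"
  obtains xs a ys where "w = xs @ a # ys" "residue n a = c" "avoids n {c} (xs @ ys)"
proof -
  obtain a where "filter (\<lambda>t. residue n t = c) w = [a]"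
    using assms unfolding occurs_once_def by (auto simp: length_Suc_conv)
  from filter_eq_ConsD[OF this] obtain xs ys where
    "w = xs @ a # ys" "\<forall>t\<in>set xs. residue n t \<noteq> c" "residue n a = c"
    "[] = filter (\<lambda>t. residue n t = c) ys"
    by blast
  then show thesis
    by (intro that) (auto simp: avoids_def dest: sym[THEN filter_empty_conv[THEN iffD1]])
qed

lemma occurs_once_two_cases:
  assumes "occurs_once n c w" "occurs_once n d w" "c \<noteq> d"
  obtains xs a ys b zs where "avoids n {c, d} (xs @ ys @ zs)" "residue n a = c" "residue n b = d"
    "w = xs @ a # ys @ b # zs \<or> w = xs @ b # ys @ a # zs"
proof -
  obtain us a vs where w: "w = us @ a # vs" "residue n a = c" "avoids n {c} (us @ vs)"
    using occurs_once_split[OF assms(1)] .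
  have "occurs_once n d (us @ vs)"
    using assms(2,3) w unfolding occurs_once_def by simp
  then obtain ps b qs where b: "us @ vs = ps @ b # qs" "residue n b = d" "avoids n {d} (ps @ qs)"
    by (rule occurs_once_split)
  show thesis
  proof (cases "length ps < length us")
    case True
    then obtain ys where "us = ps @ b # ys" "qs = ys @ vs"
      using b(1) by (auto simp: append_eq_append_conv2 append_eq_Cons_conv)
    with w b have "w = ps @ b # ys @ a # vs" "avoids n {c, d} (ps @ ys @ vs)"
      by auto
    with w b show thesis
      using that by blast
  next
    case False
    then obtain ys where "ps = us @ ys" "vs = ys @ b # qs"
      using b(1) by (auto simp: append_eq_append_conv2 append_eq_Cons_conv)
    with w b have "w = us @ a # ys @ b # qs" "avoids n {c, d} (us @ ys @ qs)"
      by auto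
    with w b show thesis
      using that by blast
  qed
qed

fun precedes :: "nat \<Rightarrow> int \<Rightarrow> int \<Rightarrow> int list \<Rightarrow> bool" where
  "precedes n c d [] \<longleftrightarrow> False"
| "precedes n c d (t # ts) \<longleftrightarrow> residue n t \<noteq> d \<and> (residue n t = c \<or> precedes n c d ts)"

lemma precedes_append_avoids: "avoids n {c, d} xs \<Longrightarrow> precedes n c d (xs @ ys) = precedes n c d ys"
  by (induction xs) auto

definition swap_entry :: "nat \<Rightarrow> int \<Rightarrow> int \<Rightarrow> int" where
  "swap_entry n i t = (if residue n t = i then t + 1 else if residue n t = i + 1 then t - 1 else t)"

lemma map_swap_entry_avoids: "avoids n {i, i + 1} xs \<Longrightarrow> map (swap_entry n i) xs = xs"
  unfolding avoids_def swap_entry_def by (induction xs) auto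

lemma Ts_eq: "Ts n i f = (\<lambda>u. vv * lin (Ft n (int i)) (lin (Et n (int i)) f) u - f u)"
  unfolding Ts_def by simp

lemma vv_nonzero [simp]: "vv \<noteq> 0"
  by (simp add: vv_def Zero_fract_def eq_fract)

context
  fixes n i :: nat
  assumes i: "1 \<le> i" "i + 1 < n"
begin

private lemma residue_i: "residue n (int i) = int i" "residue n (int i + 1) = int i + 1"
  using i by (simp_all add: residue_eq_self)

text \<open>\<open>E\<^sub>i\<close> lowers \<open>b\<close>; of the two terms of \<open>F\<^sub>i\<close>, the one raising \<open>b - 1\<close> back carries the factor
  \<open>v\<^sup>-\<^sup>1\<close> from \<open>a\<close> and cancels against \<open>- 1\<close>.\<close>

lemma Ts_bas_ordered:
  assumes "avoids n {int i, int i + 1} (xs @ ys @ zs)" "residue n a = int i" "residue n b = int i + 1"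
  shows "Ts n i (bas (xs @ a # ys @ b # zs)) = (\<lambda>u. vv * bas (xs @ (a + 1) # ys @ (b - 1) # zs) u)"
proof -
  have b: "residue n (b - 1) = int i"
    using residue_pred[of n b] assms(3) i by simp
  have "Et n (int i) ((xs @ a # ys) @ b # zs) =
      (\<lambda>u. Kt n (int i) zs * Ktinv n (int i + 1) zs * bas ((xs @ a # ys) @ (b - 1) # zs) u)"
    by (rule Et_single) (use assms residue_i in auto)
  then have E: "Et n (int i) (xs @ a # ys @ b # zs) = bas (xs @ a # ys @ (b - 1) # zs)"
    using assms by (simp add: Kt_avoids Ktinv_avoids residue_i)
  have F: "Ft n (int i) (xs @ a # ys @ (b - 1) # zs) = (\<lambda>u.
      Ktinv n (int i) xs * Kt n (int i + 1) xs * bas (xs @ (a + 1) # ys @ (b - 1) # zs) u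
    + Ktinv n (int i) (xs @ a # ys) * Kt n (int i + 1) (xs @ a # ys)
      * bas (xs @ a # ys @ (b - 1 + 1) # zs) u)"
    by (rule Ft_two) (use assms b residue_i in auto)
  show ?thesis
    using assms
    by (simp add: Ts_eq E F Kt_append Ktinv_append Kt_avoids Ktinv_avoids K1_eq K1inv_eq residue_i)
      (simp add: fun_eq_iff field_simps)
qed

text \<open>Now \<open>E\<^sub>i\<close> passes \<open>a\<close> and picks up the factor \<open>v\<close>, while the term of \<open>F\<^sub>i\<close> raising \<open>b - 1\<close>
  back has no factor, giving \<open>v\<^sup>2 - 1\<close>.\<close>

lemma Ts_bas_reversed:
  assumes "avoids n {int i, int i + 1} (xs @ ys @ zs)" "residue n a = int i" "residue n b = int i + 1"
  shows "Ts n i (bas (xs @ b # ys @ a # zs)) = (\<lambda>u. (vv^2 - 1) * bas (xs @ b # ys @ a # zs) u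
      + vv * bas (xs @ (b - 1) # ys @ (a + 1) # zs) u)"
proof -
  have b: "residue n (b - 1) = int i"
    using residue_pred[of n b] assms(3) i by simp
  have "Et n (int i) (xs @ b # (ys @ a # zs)) =
      (\<lambda>u. Kt n (int i) (ys @ a # zs) * Ktinv n (int i + 1) (ys @ a # zs)
        * bas (xs @ (b - 1) # (ys @ a # zs)) u)"
    by (rule Et_single) (use assms residue_i in auto)
  then have E: "Et n (int i) (xs @ b # ys @ a # zs) = (\<lambda>u. vv * bas (xs @ (b - 1) # ys @ a # zs) u)"
    using assms by (simp add: Kt_append Ktinv_append Kt_avoids Ktinv_avoids K1_eq K1inv_eq residue_i)
  have F: "Ft n (int i) (xs @ (b - 1) # ys @ a # zs) = (\<lambda>u.
      Ktinv n (int i) xs * Kt n (int i + 1) xs * bas (xs @ (b - 1 + 1) # ys @ a # zs) u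
    + Ktinv n (int i) (xs @ (b - 1) # ys) * Kt n (int i + 1) (xs @ (b - 1) # ys)
      * bas (xs @ (b - 1) # ys @ (a + 1) # zs) u)"
    by (rule Ft_two) (use assms b residue_i in auto)
  show ?thesis
    using assms b
    by (simp add: Ts_eq E F Kt_append Ktinv_append Kt_avoids Ktinv_avoids K1_eq K1inv_eq residue_i)
      (simp add: fun_eq_iff field_simps power2_eq_square)
qed

lemma Ts_bas:
  assumes "occurs_once n (int i) w" "occurs_once n (int i + 1) w"
  shows "Ts n i (bas w) = (\<lambda>u. (if precedes n (int i) (int i + 1) w then 0 else vv^2 - 1) * bas w u
      + vv * bas (map (swap_entry n (int i)) w) u)"
proof -
  obtain xs a ys b zs where
    h: "avoids n {int i, int i + 1} (xs @ ys @ zs)" "residue n a = int i" "residue n b = int i + 1" and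
    w: "w = xs @ a # ys @ b # zs \<or> w = xs @ b # ys @ a # zs"
    by (rule occurs_once_two_cases[OF assms]) simp
  from w show ?thesis
  proof
    assume w: "w = xs @ a # ys @ b # zs"
    show ?thesis
      using h
      by (simp add: w Ts_bas_ordered precedes_append_avoids map_swap_entry_avoids swap_entry_def)
  next
    assume w: "w = xs @ b # ys @ a # zs"
    show ?thesis
      using h
      by (simp add: w Ts_bas_reversed precedes_append_avoids map_swap_entry_avoids swap_entry_def)
  qed
qed

end


section \<open>Basis tensors of \<open>V\<^sub>\<omega>\<close>\<close>

definition omega_word :: "nat \<Rightarrow> nat \<Rightarrow> int list \<Rightarrow> bool" where
  "omega_word n r w \<longleftrightarrow> length w = r \<and> (\<forall>t\<in>set w. residue n t \<le> int r) \<and>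
     (\<forall>c\<in>{1..int r}. occurs_once n c w)"

lemma omega_word_residue_bounds:
  "omega_word n r w \<Longrightarrow> r < n \<Longrightarrow> t \<in> set w \<Longrightarrow> 1 \<le> residue n t \<and> residue n t \<le> int r"
  unfolding omega_word_def using residue_bounds[of n t] by auto

lemma wt_eq_length_filter:
  "1 \<le> i \<Longrightarrow> i \<le> n \<Longrightarrow> wt n w i = length (filter (\<lambda>t. residue n t = int i) w)"
  unfolding wt_def length_filter_conv_card residue_eq_iff_cong[symmetric] by (simp add: residue_eq_self)

lemma weight_omega_iff_omega_word:
  assumes "r < n"
  shows "(length w = r \<and> (\<forall>i\<in>{1..n}. wt n w i = (if i \<le> r then 1 else 0))) \<longleftrightarrow> omega_word n r w"
proof
  assume h: "length w = r \<and> (\<forall>i\<in>{1..n}. wt n w i = (if i \<le> r then 1 else 0))"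
  have "residue n t \<le> int r" if "t \<in> set w" for t
  proof -
    define k where "k = nat (residue n t)"
    have k: "residue n t = int k" "1 \<le> k" "k \<le> n"
      using residue_bounds[of n t] assms unfolding k_def by auto
    have "filter (\<lambda>s. residue n s = int k) w \<noteq> []"
      using that k(1) by (auto simp: filter_empty_conv)
    then have "k \<le> r"
      using h wt_eq_length_filter[of k n w] k by (auto split: if_splits)
    then show ?thesis
      using k(1) by simp
  qed
  moreover have "occurs_once n c w" if c: "c \<in> {1..int r}" for c
  proof -
    have "nat c \<in> {1..n}" "nat c \<le> r" "int (nat c) = c"
      using c assms by auto
    then show ?thesis
      using h wt_eq_length_filter[of "nat c" n w] unfolding occurs_once_def by auto
  qed
  ultimately show "omega_word n r w"
    using h unfolding omega_word_def by auto
next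
  assume w: "omega_word n r w"
  have "wt n w i = (if i \<le> r then 1 else 0)" if i: "i \<in> {1..n}" for i
  proof (cases "i \<le> r")
    case True
    then show ?thesis
      using w i wt_eq_length_filter[of i n w] unfolding omega_word_def occurs_once_def by auto
  next
    case False
    then have "filter (\<lambda>t. residue n t = int i) w = []"
      using w unfolding omega_word_def by (auto simp: filter_empty_conv)
    then show ?thesis
      using False i wt_eq_length_filter[of i n w] by auto
  qed
  then show "length w = r \<and> (\<forall>i\<in>{1..n}. wt n w i = (if i \<le> r then 1 else 0))"
    using w unfolding omega_word_def by auto
qed

lemma Vomega_iff:
  assumes "r < n"
  shows "Vomega n r f \<longleftrightarrow> finsupp f \<and> (\<forall>w\<in>supp f. omega_word n r w)"
  unfolding Vomega_def finsupp_def supp_def weight_omega_iff_omega_word[OF assms] by blast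

lemma Vomega_bas: "r < n \<Longrightarrow> omega_word n r w \<Longrightarrow> Vomega n r (bas w)"
  by (simp add: Vomega_iff supp_bas)

lemma Vomega_lincomb:
  "r < n \<Longrightarrow> Vomega n r f \<Longrightarrow> Vomega n r g \<Longrightarrow> Vomega n r (\<lambda>u. a * f u + b * g u)"
  by (auto simp: Vomega_iff supp_def) (metis mult_zero_right add_0)

lemma Vomega_closed:
  assumes nr: "r < n" and P: "linear_op P" and f: "Vomega n r f"
    and Pw: "\<And>w. omega_word n r w \<Longrightarrow> Vomega n r (P (bas w))"
  shows "Vomega n r (P f)"
proof -
  have fs: "finsupp f" and ws: "\<And>w. w \<in> supp f \<Longrightarrow> omega_word n r w"
    using f nr by (auto simp: Vomega_iff)
  have fin: "finite (supp f)"
    using fs unfolding finsupp_def .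
  have "Vomega n r (\<lambda>u. \<Sum>w\<in>S. f w * P (bas w) u)" if "finite S" "S \<subseteq> supp f" for S
    using that
  proof (induction S rule: finite_induct)
    case empty
    then show ?case using nr by (simp add: Vomega_iff supp_def)
  next
    case (insert x S)
    then show ?case
      using Vomega_lincomb[OF nr Pw[OF ws], of x _ "f x" 1] by simp
  qed
  moreover have "P f = (\<lambda>u. \<Sum>w\<in>supp f. f w * P (bas w) u)"
    by (subst finsupp_expansion[OF fs]) (rule linear_op_sum_bas[OF P fin])
  ultimately show ?thesis
    using fin by simp
qed

lemma Vomega_eq_on_basis:
  "r < n \<Longrightarrow> linear_op P \<Longrightarrow> linear_op Q \<Longrightarrow> Vomega n r f \<Longrightarrow>
    (\<And>w. omega_word n r w \<Longrightarrow> P (bas w) = Q (bas w)) \<Longrightarrow> P f = Q f"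
  by (rule linear_op_eq_on_basis) (auto simp: Vomega_iff)

lemma omega_word_map:
  assumes w: "omega_word n r w" and nr: "r < n"
    and f: "\<forall>t\<in>set w. residue n (f t) = \<phi> (residue n t)"
    and \<phi>: "\<phi> ` {1..int r} \<subseteq> {1..int r}" "inj_on \<phi> {1..int r}"
  shows "omega_word n r (map f w)"
proof -
  have rng: "\<forall>t\<in>set w. residue n t \<in> {1..int r}"
    using omega_word_residue_bounds[OF w nr] by auto
  have surj: "\<phi> ` {1..int r} = {1..int r}"
    using \<phi> by (intro endo_inj_surj) auto
  have "occurs_once n c (map f w)" if c: "c \<in> {1..int r}" for c
  proof -
    obtain b where b: "b \<in> {1..int r}" "\<phi> b = c"
      using surj c by (metis imageE)
    have "filter (\<lambda>t. residue n (f t) = c) w = filter (\<lambda>t. residue n t = b) w"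
    proof (rule filter_cong)
      fix t assume "t \<in> set w"
      then show "residue n (f t) = c \<longleftrightarrow> residue n t = b"
        using f rng b \<phi>(2) by (metis inj_onD)
    qed simp
    then show ?thesis
      using w b unfolding occurs_once_def omega_word_def by (simp add: filter_map comp_def)
  qed
  moreover have "\<forall>t\<in>set (map f w). residue n t \<le> int r"
    using f rng \<phi>(1) by fastforce
  ultimately show ?thesis
    using w unfolding omega_word_def by simp
qed


section \<open>The action of \<open>T\<^sub>\<rho>\<close> and its inverse on basis tensors\<close>

lemma Et_map_single:
  assumes "occurs_once n c w"
    and "\<forall>t\<in>set w. residue n (f t) = residue n (k + 1) \<longleftrightarrow> residue n t = c"
    and "\<forall>t\<in>set w. residue n (f t) \<noteq> residue n k"
  shows "Et n k (map f w) = bas (map (\<lambda>t. if residue n t = c then f t - 1 else f t) w)"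
proof -
  obtain xs a ys where w: "w = xs @ a # ys" "residue n a = c" "avoids n {c} (xs @ ys)"
    using occurs_once_split[OF assms(1)] .
  have "Et n k (map f xs @ f a # map f ys) =
      (\<lambda>u. Kt n k (map f ys) * Ktinv n (k + 1) (map f ys) * bas (map f xs @ (f a - 1) # map f ys) u)"
    by (rule Et_single) (use w assms(2) in \<open>auto simp: avoids_def\<close>)
  moreover have "Kt n k (map f ys) = 1" "Ktinv n (k + 1) (map f ys) = 1"
    using w assms(2,3) by (auto simp: avoids_def intro!: Kt_avoids Ktinv_avoids)
  moreover have "map (\<lambda>t. if residue n t = c then f t - 1 else f t) xs = map f xs"
    "map (\<lambda>t. if residue n t = c then f t - 1 else f t) ys = map f ys"
    using w(3) by (auto simp: avoids_def)
  ultimately show ?thesis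
    using w(1,2) by (simp only: map_append list.map mult_1_left simp_thms if_True)
qed

lemma Ft_map_single:
  assumes "occurs_once n c w"
    and "\<forall>t\<in>set w. residue n (f t) = residue n k \<longleftrightarrow> residue n t = c"
    and "\<forall>t\<in>set w. residue n (f t) \<noteq> residue n (k + 1)"
  shows "Ft n k (map f w) = bas (map (\<lambda>t. if residue n t = c then f t + 1 else f t) w)"
proof -
  obtain xs a ys where w: "w = xs @ a # ys" "residue n a = c" "avoids n {c} (xs @ ys)"
    using occurs_once_split[OF assms(1)] .
  have "Ft n k (map f xs @ f a # map f ys) =
      (\<lambda>u. Ktinv n k (map f xs) * Kt n (k + 1) (map f xs) * bas (map f xs @ (f a + 1) # map f ys) u)"
    by (rule Ft_single) (use w assms(2) in \<open>auto simp: avoids_def\<close>)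
  moreover have "Ktinv n k (map f xs) = 1" "Kt n (k + 1) (map f xs) = 1"
    using w assms(2,3) by (auto simp: avoids_def intro!: Kt_avoids Ktinv_avoids)
  moreover have "map (\<lambda>t. if residue n t = c then f t + 1 else f t) xs = map f xs"
    "map (\<lambda>t. if residue n t = c then f t + 1 else f t) ys = map f ys"
    using w(3) by (auto simp: avoids_def)
  ultimately show ?thesis
    using w(1,2) by (simp only: map_append list.map mult_1_left simp_thms if_True)
qed

text \<open>\<open>E\<^sub>n, E\<^sub>1, \<dots>, E\<^sub>r\<^sub>-\<^sub>1\<close> lower every entry of an \<open>\<omega>\<close>-word by one, the entry of residue \<open>1\<close>
  landing in residue \<open>n\<close>; then \<open>E\<^sub>n\<^sub>-\<^sub>1, \<dots>, E\<^sub>r\<close> carry that entry on down to residue \<open>r\<close>.\<close>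

definition rho_entry :: "nat \<Rightarrow> nat \<Rightarrow> int \<Rightarrow> int" where
  "rho_entry n r t = (if residue n t = 1 then t - 1 - int (n - r) else t - 1)"

definition rho_inv_entry :: "nat \<Rightarrow> nat \<Rightarrow> int \<Rightarrow> int" where
  "rho_inv_entry n r t = (if residue n t = int r then t + 1 + int (n - r) else t + 1)"

context
  fixes n r :: nat
  assumes r: "1 \<le> r" "r < n"
begin

private lemma n_pos: "n > 0"
  using r by simp

private lemma residue_n: "residue n (int n) = int n"
  using r by (simp add: residue_eq_self)

lemma Trho_first_part_bas:
  assumes w: "omega_word n r w"
  shows "m \<le> r - 1 \<Longrightarrow> word_op n (map (\<lambda>k. GE (int k)) (rev [1..<m + 1]) @ [GE (int n)]) (bas w) =
      bas (map (\<lambda>t. if residue n t \<le> int m + 1 then t - 1 else t) w)"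
proof (induction m)
  case 0
  note bounds = omega_word_residue_bounds[OF w r(2)]
  have "Et n (int n) (map id w) = bas (map (\<lambda>t. if residue n t = 1 then id t - 1 else id t) w)"
    by (rule Et_map_single)
      (use w r in \<open>auto simp: omega_word_def residue_succ_n residue_n dest!: bounds\<close>)
  moreover have "map (\<lambda>t. if residue n t = 1 then id t - 1 else id t) w =
      map (\<lambda>t. if residue n t \<le> 1 then t - 1 else t) w"
    by (auto dest!: bounds)
  ultimately show ?case
    by simp
next
  case (Suc m)
  note bounds = omega_word_residue_bounds[OF w r(2)]
  let ?g = "\<lambda>t. if residue n t \<le> int m + 1 then t - 1 else t"
  have m: "int m + 2 \<le> int r"
    using Suc.prems r by simp
  have "Et n (int (Suc m)) (map ?g w) =
      bas (map (\<lambda>t. if residue n t = int m + 2 then ?g t - 1 else ?g t) w)"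
    by (rule Et_map_single)
      (use w m r in \<open>auto simp: omega_word_def residue_eq_self residue_pred[OF n_pos] dest!: bounds\<close>)
  moreover have "(\<lambda>t. if residue n t = int m + 2 then ?g t - 1 else ?g t) =
      (\<lambda>t. if residue n t \<le> int (Suc m) + 1 then t - 1 else t)"
    by auto
  ultimately show ?case
    using Suc by simp
qed

lemma Trho_second_part_bas:
  assumes w: "omega_word n r w" and k: "r \<le> k" "k \<le> n"
  shows "word_op n (map (\<lambda>j. GE (int j)) [k..<n]) (bas (map (\<lambda>t. t - 1) w)) =
      bas (map (\<lambda>t. if residue n t = 1 then t - 1 - int (n - k) else t - 1) w)"
  using k(2)
proof (induction k rule: inc_induct)
  case base
  then show ?case
    by (simp cong: if_cong)
next
  case (step k)
  note bounds = omega_word_residue_bounds[OF w r(2)]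
  let ?g = "\<lambda>t. if residue n t = 1 then t - 1 - int (n - Suc k) else t - 1"
  have k: "k < n" "r \<le> k"
    using step.hyps assms(2) by simp_all
  have wrap: "residue n (t - 1 - int (n - Suc k)) = int k + 1" if "residue n t = 1" for t
  proof -
    have "residue n (t + (- 1 - int (n - Suc k))) = residue n (1 + (- 1 - int (n - Suc k)))"
      by (rule residue_eq_shift) (use that r in \<open>simp add: residue_eq_self\<close>)
    also have "1 + (- 1 - int (n - Suc k)) = int k + 1 - int n"
      using k by simp
    finally show ?thesis
      using k by (simp add: residue_diff_n residue_eq_self)
  qed
  have g: "residue n (?g t) = (if residue n t = 1 then int k + 1 else residue n t - 1)"
    if "t \<in> set w" for t
    using wrap residue_pred[OF n_pos, of t] by auto
  have "Et n (int k) (map ?g w) = bas (map (\<lambda>t. if residue n t = 1 then ?g t - 1 else ?g t) w)"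
  proof (rule Et_map_single)
    show "occurs_once n 1 w"
      using w r unfolding omega_word_def by simp
    have "residue n (?g t) = residue n (int k + 1) \<longleftrightarrow> residue n t = 1"
      "residue n (?g t) \<noteq> residue n (int k)" if "t \<in> set w" for t
      using g[OF that] bounds[OF that] k by (auto simp: residue_eq_self)
    then show "\<forall>t\<in>set w. residue n (?g t) = residue n (int k + 1) \<longleftrightarrow> residue n t = 1"
      "\<forall>t\<in>set w. residue n (?g t) \<noteq> residue n (int k)"
      by blast+
  qed
  moreover have "(\<lambda>t. if residue n t = 1 then ?g t - 1 else ?g t) =
      (\<lambda>t. if residue n t = 1 then t - 1 - int (n - k) else t - 1)"
    using k by (auto simp: fun_eq_iff of_nat_diff)
  ultimately show ?case
    using step.IH k by (simp add: upt_conv_Cons)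
qed

lemma Trho_bas:
  assumes w: "omega_word n r w"
  shows "Trho n r (bas w) = bas (map (rho_entry n r) w)"
proof -
  have "rev [1..<r] = rev [1..<(r - 1) + 1]"
    using r by simp
  then have "Trho n r (bas w) = word_op n (map (\<lambda>j. GE (int j)) [r..<n])
      (word_op n (map (\<lambda>k. GE (int k)) (rev [1..<(r - 1) + 1]) @ [GE (int n)]) (bas w))"
    unfolding Trho_def word_op_append by simp
  also have "\<dots> = word_op n (map (\<lambda>j. GE (int j)) [r..<n]) (bas (map (\<lambda>t. t - 1) w))"
    using Trho_first_part_bas[OF w order.refl] omega_word_residue_bounds[OF w r(2)] r
    by (simp cong: map_cong)
  also have "\<dots> = bas (map (rho_entry n r) w)"
    using Trho_second_part_bas[OF w order.refl less_imp_le[OF r(2)]]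
    by (simp add: rho_entry_def[abs_def])
  finally show ?thesis .
qed

lemma Trhoinv_first_part_bas:
  assumes w: "omega_word n r w" and k: "1 \<le> k" "k \<le> r + 1"
  shows "word_op n (map (\<lambda>j. GF (int j)) [k..<r + 1]) (bas w) =
      bas (map (\<lambda>t. if int k \<le> residue n t then t + 1 else t) w)"
  using k(2)
proof (induction k rule: inc_induct)
  case base
  have "map (\<lambda>t. if int (r + 1) \<le> residue n t then t + 1 else t) w = w"
    using omega_word_residue_bounds[OF w r(2)] by (intro map_idI) force
  then show ?case
    by simp
next
  case (step k)
  note bounds = omega_word_residue_bounds[OF w r(2)]
  let ?g = "\<lambda>t. if int (Suc k) \<le> residue n t then t + 1 else t"
  have k: "1 \<le> k" "k \<le> r"
    using step.hyps assms(2) by simp_all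
  have g: "residue n (?g t) = (if int k < residue n t then residue n t + 1 else residue n t)"
    if "t \<in> set w" for t
    using bounds[OF that] r by (auto simp: residue_succ[OF n_pos])
  have "Ft n (int k) (map ?g w) = bas (map (\<lambda>t. if residue n t = int k then ?g t + 1 else ?g t) w)"
  proof (rule Ft_map_single)
    show "occurs_once n (int k) w"
      using w k unfolding omega_word_def by simp
    have "residue n (?g t) = residue n (int k) \<longleftrightarrow> residue n t = int k"
      "residue n (?g t) \<noteq> residue n (int k + 1)" if "t \<in> set w" for t
      using g[OF that] bounds[OF that] k r by (auto simp: residue_eq_self)
    then show "\<forall>t\<in>set w. residue n (?g t) = residue n (int k) \<longleftrightarrow> residue n t = int k"
      "\<forall>t\<in>set w. residue n (?g t) \<noteq> residue n (int k + 1)"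
      by blast+
  qed
  moreover have "(\<lambda>t. if residue n t = int k then ?g t + 1 else ?g t) =
      (\<lambda>t. if int k \<le> residue n t then t + 1 else t)"
    by (auto simp: fun_eq_iff)
  ultimately show ?case
    using step.IH k by (simp add: upt_conv_Cons del: upt_Suc)
qed

lemma Trhoinv_second_part_bas:
  assumes w: "omega_word n r w" and m: "r \<le> m" "m \<le> n"
  shows "word_op n (map (\<lambda>j. GF (int j)) (rev [r + 1..<m + 1])) (bas (map (\<lambda>t. t + 1) w)) =
      bas (map (\<lambda>t. if residue n t = int r then t + 1 + int (m - r) else t + 1) w)"
  using m(1)
proof (induction m rule: dec_induct)
  case base
  then show ?case
    by (simp cong: if_cong)
next
  case (step k)
  note bounds = omega_word_residue_bounds[OF w r(2)]
  let ?g = "\<lambda>t. if residue n t = int r then t + 1 + int (k - r) else t + 1"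
  have k: "r \<le> k" "k < n"
    using step.hyps assms(3) by simp_all
  have wrap: "residue n (t + (1 + int (k - r))) = int k + 1" if "residue n t = int r" for t
  proof -
    have "residue n (t + (1 + int (k - r))) = residue n (int r + (1 + int (k - r)))"
      by (rule residue_eq_shift) (use that r in \<open>simp add: residue_eq_self\<close>)
    then show ?thesis
      using k by (simp add: residue_eq_self)
  qed
  have g: "residue n (?g t) = (if residue n t = int r then int k + 1 else residue n t + 1)"
    if "t \<in> set w" for t
    using wrap bounds[OF that] r by (auto simp: residue_succ[OF n_pos] add.assoc)
  have next_res: "residue n (int k + 1 + 1) = (if k + 1 = n then 1 else int k + 2)"
    using k residue_succ[OF n_pos, of "int k + 1"] by (auto simp: residue_eq_self)
  have "Ft n (int (Suc k)) (map ?g w) =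
      bas (map (\<lambda>t. if residue n t = int r then ?g t + 1 else ?g t) w)"
  proof (rule Ft_map_single)
    show "occurs_once n (int r) w"
      using w r unfolding omega_word_def by simp
    have "residue n (?g t) = residue n (int (Suc k)) \<longleftrightarrow> residue n t = int r"
      "residue n (?g t) \<noteq> residue n (int (Suc k) + 1)" if "t \<in> set w" for t
      using g[OF that] bounds[OF that] k r next_res by (auto simp: residue_eq_self)
    then show "\<forall>t\<in>set w. residue n (?g t) = residue n (int (Suc k)) \<longleftrightarrow> residue n t = int r"
      "\<forall>t\<in>set w. residue n (?g t) \<noteq> residue n (int (Suc k) + 1)"
      by blast+
  qed
  moreover have "(\<lambda>t. if residue n t = int r then ?g t + 1 else ?g t) =
      (\<lambda>t. if residue n t = int r then t + 1 + int (Suc k - r) else t + 1)"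
    using k by (auto simp: fun_eq_iff)
  moreover have "rev [r + 1..<Suc k + 1] = Suc k # rev [r + 1..<k + 1]"
    using k by simp
  ultimately show ?case
    using step.IH by (simp del: upt_Suc)
qed

lemma Trhoinv_bas:
  assumes w: "omega_word n r w"
  shows "Trhoinv n r (bas w) = bas (map (rho_inv_entry n r) w)"
proof -
  have "Trhoinv n r (bas w) = word_op n (map (\<lambda>k. GF (int k)) (rev [r + 1..<n + 1]))
      (word_op n (map (\<lambda>k. GF (int k)) [1..<r + 1]) (bas w))"
    unfolding Trhoinv_def word_op_append by simp
  also have "\<dots> = word_op n (map (\<lambda>k. GF (int k)) (rev [r + 1..<n + 1])) (bas (map (\<lambda>t. t + 1) w))"
    using Trhoinv_first_part_bas[OF w order.refl] omega_word_residue_bounds[OF w r(2)] r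
    by (simp cong: map_cong del: upt_Suc)
  also have "\<dots> = bas (map (rho_inv_entry n r) w)"
    using Trhoinv_second_part_bas[OF w less_imp_le[OF r(2)] order.refl]
    by (simp add: rho_inv_entry_def[abs_def] del: upt_Suc)
  finally show ?thesis .
qed

lemma residue_rho_entry:
  assumes "1 \<le> residue n t" "residue n t \<le> int r"
  shows "residue n (rho_entry n r t) = (if residue n t = 1 then int r else residue n t - 1)"
proof (cases "residue n t = 1")
  case True
  have "residue n (rho_entry n r t) = residue n (t + (- 1 - int (n - r)))"
    using True by (simp add: rho_entry_def algebra_simps)
  also have "\<dots> = residue n (1 + (- 1 - int (n - r)))"
    by (rule residue_eq_shift) (use True r in \<open>simp add: residue_eq_self\<close>)
  also have "1 + (- 1 - int (n - r)) = int r - int n"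
    using r by simp
  also have "residue n (int r - int n) = int r"
    using r by (simp add: residue_diff_n residue_eq_self)
  finally show ?thesis
    using True by simp
next
  case False
  then show ?thesis
    using assms by (simp add: rho_entry_def residue_pred[OF n_pos])
qed

lemma residue_rho_inv_entry:
  assumes "1 \<le> residue n t" "residue n t \<le> int r"
  shows "residue n (rho_inv_entry n r t) = (if residue n t = int r then 1 else residue n t + 1)"
proof (cases "residue n t = int r")
  case True
  have "residue n (rho_inv_entry n r t) = residue n (t + (1 + int (n - r)))"
    using True by (simp add: rho_inv_entry_def algebra_simps)
  also have "\<dots> = residue n (int r + (1 + int (n - r)))"
    by (rule residue_eq_shift) (use True r in \<open>simp add: residue_eq_self\<close>)
  also have "int r + (1 + int (n - r)) = int n + 1"
    using r by simp
  finally show ?thesis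
    using True by (simp add: residue_succ_n)
next
  case False
  then show ?thesis
    using assms r by (simp add: rho_inv_entry_def residue_succ[OF n_pos])
qed

lemma rho_entry_rho_inv_entry:
  "1 \<le> residue n t \<Longrightarrow> residue n t \<le> int r \<Longrightarrow> rho_entry n r (rho_inv_entry n r t) = t"
  using residue_rho_inv_entry[of t] r by (auto simp: rho_entry_def rho_inv_entry_def)

lemma rho_inv_entry_rho_entry:
  "1 \<le> residue n t \<Longrightarrow> residue n t \<le> int r \<Longrightarrow> rho_inv_entry n r (rho_entry n r t) = t"
  using residue_rho_entry[of t] r by (auto simp: rho_entry_def rho_inv_entry_def)

lemma omega_word_rho: "omega_word n r w \<Longrightarrow> omega_word n r (map (rho_entry n r) w)"
  by (rule omega_word_map[where \<phi> = "\<lambda>c. if c = 1 then int r else c - 1"])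
    (use r omega_word_residue_bounds residue_rho_entry in \<open>auto simp: inj_on_def\<close>)

lemma omega_word_rho_inv: "omega_word n r w \<Longrightarrow> omega_word n r (map (rho_inv_entry n r) w)"
  by (rule omega_word_map[where \<phi> = "\<lambda>c. if c = int r then 1 else c + 1"])
    (use r omega_word_residue_bounds residue_rho_inv_entry in \<open>auto simp: inj_on_def\<close>)

lemma funpow_rho_inv_entry_residue_bounds:
  "1 \<le> residue n t \<Longrightarrow> residue n t \<le> int r \<Longrightarrow>
    1 \<le> residue n ((rho_inv_entry n r ^^ k) t) \<and> residue n ((rho_inv_entry n r ^^ k) t) \<le> int r"
  by (induction k) (use r residue_rho_inv_entry in auto)

lemma funpow_rho_entry_rho_inv_entry:
  "1 \<le> residue n t \<Longrightarrow> residue n t \<le> int r \<Longrightarrow> (rho_entry n r ^^ k) ((rho_inv_entry n r ^^ k) t) = t"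
proof (induction k)
  case (Suc k)
  have "(rho_entry n r ^^ Suc k) x = (rho_entry n r ^^ k) (rho_entry n r x)" for x
    by (simp only: funpow_Suc_right comp_apply)
  then show ?case
    using Suc rho_entry_rho_inv_entry funpow_rho_inv_entry_residue_bounds by simp
qed simp

lemma funpow_rho_inv_entry_eq_add:
  "1 \<le> residue n t \<Longrightarrow> residue n t + int k \<le> int r \<Longrightarrow> (rho_inv_entry n r ^^ k) t = t + int k"
proof (induction k)
  case (Suc k)
  have "residue n (t + int k) = residue n t + int k"
    using Suc r by (intro residue_add_eq) auto
  then show ?case
    using Suc by (simp add: rho_inv_entry_def)
qed simp

text \<open>From residue \<open>a\<close>, \<open>r - a\<close> steps of \<open>rho_inv_entry\<close> reach residue \<open>r\<close>, the next one jumps by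
  \<open>n - r + 1\<close> to residue \<open>1\<close>, and \<open>a - 1\<close> more steps return to residue \<open>a\<close>: a total shift of \<open>n\<close>.\<close>

lemma funpow_rho_inv_entry_r:
  assumes t: "1 \<le> residue n t" "residue n t \<le> int r"
  shows "(rho_inv_entry n r ^^ r) t = t + int n"
proof -
  define a where "a = nat (residue n t)"
  have a: "int a = residue n t" "1 \<le> a" "a \<le> r"
    using t unfolding a_def by auto
  define s where "s = t + int (r - a)"
  have s: "(rho_inv_entry n r ^^ (r - a)) t = s" "residue n s = int r"
    using t a r unfolding s_def by (auto simp: funpow_rho_inv_entry_eq_add residue_add_eq)
  have wrap: "rho_inv_entry n r s = s + 1 + int (n - r)" "residue n (rho_inv_entry n r s) = 1"
    using s(2) residue_rho_inv_entry[of s] r by (simp_all add: rho_inv_entry_def)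
  have r_split: "(a - 1) + Suc (r - a) = r"
    using a by simp
  have "(rho_inv_entry n r ^^ r) t = (rho_inv_entry n r ^^ ((a - 1) + Suc (r - a))) t"
    by (simp only: r_split)
  also have "\<dots> = (rho_inv_entry n r ^^ (a - 1)) (rho_inv_entry n r s)"
    by (simp only: funpow_add funpow.simps comp_apply s(1))
  also have "\<dots> = s + 1 + int (n - r) + int (a - 1)"
    using wrap a by (simp add: funpow_rho_inv_entry_eq_add)
  also have "\<dots> = t + int n"
    using a r unfolding s_def by simp
  finally show ?thesis .
qed

lemma omega_word_funpow_rho_inv: "omega_word n r w \<Longrightarrow> omega_word n r (map (rho_inv_entry n r ^^ k) w)"
  by (induction k) (simp_all add: omega_word_rho_inv flip: map_map)

lemma omega_word_funpow_rho: "omega_word n r w \<Longrightarrow> omega_word n r (map (rho_entry n r ^^ k) w)"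
  by (induction k) (simp_all add: omega_word_rho flip: map_map)

lemma funpow_Trhoinv_bas:
  "omega_word n r w \<Longrightarrow> (Trhoinv n r ^^ k) (bas w) = bas (map (rho_inv_entry n r ^^ k) w)"
  by (induction k) (simp_all add: Trhoinv_bas omega_word_funpow_rho_inv flip: map_map)

lemma funpow_Trho_bas:
  "omega_word n r w \<Longrightarrow> (Trho n r ^^ k) (bas w) = bas (map (rho_entry n r ^^ k) w)"
  by (induction k) (simp_all add: Trho_bas omega_word_funpow_rho flip: map_map)

lemma funpow_Trhoinv_r_bas:
  assumes "omega_word n r w"
  shows "(Trhoinv n r ^^ r) (bas w) = bas (map (\<lambda>t. t + int n) w)"
  using funpow_Trhoinv_bas[OF assms] funpow_rho_inv_entry_r omega_word_residue_bounds[OF assms r(2)]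
  by (simp cong: map_cong)

lemma funpow_Trho_r_bas:
  assumes "omega_word n r w"
  shows "(Trho n r ^^ r) (bas (map (\<lambda>t. t + int n) w)) = bas w"
proof -
  have "map (\<lambda>t. t + int n) w = map (rho_inv_entry n r ^^ r) w"
    using funpow_rho_inv_entry_r omega_word_residue_bounds[OF assms r(2)] by simp
  then show ?thesis
    using funpow_Trho_bas[OF omega_word_funpow_rho_inv[OF assms]]
      funpow_rho_entry_rho_inv_entry omega_word_residue_bounds[OF assms r(2)]
    by (simp cong: map_cong)
qed

end


section \<open>Relations on basis tensors\<close>

lemma occurs_once_map:
  "\<forall>t\<in>set w. residue n (f t) = c' \<longleftrightarrow> residue n t = c \<Longrightarrow> occurs_once n c' (map f w) = occurs_once n c w"
  unfolding occurs_once_def by (simp add: filter_map comp_def cong: filter_cong)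

lemma precedes_map:
  "\<forall>t\<in>set w. (residue n (f t) = c' \<longleftrightarrow> residue n t = c) \<and> (residue n (f t) = d' \<longleftrightarrow> residue n t = d) \<Longrightarrow>
    precedes n c' d' (map f w) = precedes n c d w"
  by (induction w) auto

lemma precedes_flip:
  assumes "occurs_once n c w" "occurs_once n d w" "c \<noteq> d"
  shows "precedes n d c w \<longleftrightarrow> \<not> precedes n c d w"
proof -
  obtain xs a ys b zs where
    "avoids n {c, d} (xs @ ys @ zs)" "residue n a = c" "residue n b = d"
    "w = xs @ a # ys @ b # zs \<or> w = xs @ b # ys @ a # zs"
    by (rule occurs_once_two_cases[OF assms])
  then show ?thesis
    using assms(3) by (auto simp: precedes_append_avoids insert_commute)
qed

context
  fixes n :: nat and i :: int
  assumes i: "1 \<le> i" "i + 1 < int n"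
begin

lemma residue_swap_entry:
  "residue n (swap_entry n i t) =
    (if residue n t = i then i + 1 else if residue n t = i + 1 then i else residue n t)"
  using i by (auto simp: swap_entry_def residue_succ residue_pred)

lemma swap_entry_swap_entry: "swap_entry n i (swap_entry n i t) = t"
  using residue_swap_entry[of t] by (auto simp: swap_entry_def)

lemma occurs_once_swap_entry:
  "occurs_once n i (map (swap_entry n i) w) = occurs_once n (i + 1) w"
  "occurs_once n (i + 1) (map (swap_entry n i) w) = occurs_once n i w"
  by (rule occurs_once_map; use residue_swap_entry in auto)+

lemma precedes_swap_entry:
  assumes "occurs_once n i w" "occurs_once n (i + 1) w"
  shows "precedes n i (i + 1) (map (swap_entry n i) w) \<longleftrightarrow> \<not> precedes n i (i + 1) w"
proof -
  have "precedes n i (i + 1) (map (swap_entry n i) w) = precedes n (i + 1) i w"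
    by (rule precedes_map) (use residue_swap_entry in auto)
  then show ?thesis
    using precedes_flip[OF assms] by simp
qed

end

lemma map_swap_entry_involutive:
  "1 \<le> i \<Longrightarrow> i + 1 < int n \<Longrightarrow> map (swap_entry n i) (map (swap_entry n i) w) = w"
  by (simp add: swap_entry_swap_entry map_idI)

lemma Ts_quadratic_bas:
  fixes n i :: nat
  assumes i: "1 \<le> i" "i + 1 < n" and w: "occurs_once n (int i) w" "occurs_once n (int i + 1) w"
  shows "Ts n i (Ts n i (bas w)) = (\<lambda>u. (vv^2 - 1) * Ts n i (bas w) u + vv^2 * bas w u)"
proof -
  have i': "1 \<le> int i" "int i + 1 < int n"
    using i by simp_all
  let ?w' = "map (swap_entry n (int i)) w"
  have w': "occurs_once n (int i) ?w'" "occurs_once n (int i + 1) ?w'"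
    using w by (simp_all add: occurs_once_swap_entry[OF i'])
  have "Ts n i (Ts n i (bas w)) =
      Ts n i (\<lambda>u. (if precedes n (int i) (int i + 1) w then 0 else vv^2 - 1) * bas w u
      + vv * bas ?w' u)"
    by (simp add: Ts_bas[OF i w])
  also have "\<dots> = (\<lambda>u. (if precedes n (int i) (int i + 1) w then 0 else vv^2 - 1) * Ts n i (bas w) u
      + vv * Ts n i (bas ?w') u)"
    by (simp add: linear_op_lincomb[OF linear_op_Ts])
  also have "\<dots> = (\<lambda>u. (vv^2 - 1) * Ts n i (bas w) u + vv^2 * bas w u)"
    unfolding Ts_bas[OF i w] Ts_bas[OF i w'] precedes_swap_entry[OF i' w]
      map_swap_entry_involutive[OF i']
    by (simp add: fun_eq_iff algebra_simps power2_eq_square)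
  finally show ?thesis .
qed

lemma swap_entry_commute:
  assumes "1 \<le> i" "i + 1 < int n" "1 \<le> j" "j + 1 < int n" "\<bar>i - j\<bar> > 1"
  shows "swap_entry n i (swap_entry n j t) = swap_entry n j (swap_entry n i t)"
  using residue_swap_entry[OF assms(1,2), of t] residue_swap_entry[OF assms(3,4), of t] assms(5)
  unfolding swap_entry_def by auto

lemma Ts_commute_bas:
  fixes n i j :: nat
  assumes i: "1 \<le> i" "i + 1 < n" and j: "1 \<le> j" "j + 1 < n" and ij: "\<bar>int i - int j\<bar> > 1"
    and w: "occurs_once n (int i) w" "occurs_once n (int i + 1) w"
      "occurs_once n (int j) w" "occurs_once n (int j + 1) w"
  shows "Ts n i (Ts n j (bas w)) = Ts n j (Ts n i (bas w))"
proof -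
  have i': "1 \<le> int i" "int i + 1 < int n" and j': "1 \<le> int j" "int j + 1 < int n"
    using i j by simp_all
  let ?wi = "map (swap_entry n (int i)) w" and ?wj = "map (swap_entry n (int j)) w"
  have inert_i: "residue n (swap_entry n (int i) t) = c \<longleftrightarrow> residue n t = c"
    if "c \<in> {int j, int j + 1}" for t c
    using residue_swap_entry[OF i', of t] that ij by auto
  have inert_j: "residue n (swap_entry n (int j) t) = c \<longleftrightarrow> residue n t = c"
    if "c \<in> {int i, int i + 1}" for t c
    using residue_swap_entry[OF j', of t] that ij by auto
  have "occurs_once n c ?wi = occurs_once n c w" if "c \<in> {int j, int j + 1}" for c
    by (rule occurs_once_map) (simp add: inert_i[OF that])
  moreover have "occurs_once n c ?wj = occurs_once n c w" if "c \<in> {int i, int i + 1}" for c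
    by (rule occurs_once_map) (simp add: inert_j[OF that])
  ultimately have wi: "occurs_once n (int j) ?wi" "occurs_once n (int j + 1) ?wi"
    and wj: "occurs_once n (int i) ?wj" "occurs_once n (int i + 1) ?wj"
    using w by simp_all
  have precedes_wi: "precedes n (int j) (int j + 1) ?wi = precedes n (int j) (int j + 1) w"
    and precedes_wj: "precedes n (int i) (int i + 1) ?wj = precedes n (int i) (int i + 1) w"
    by (rule precedes_map; simp add: inert_i inert_j)+
  have swaps:
    "swap_entry n (int i) \<circ> swap_entry n (int j) = swap_entry n (int j) \<circ> swap_entry n (int i)"
    using swap_entry_commute[OF i' j' ij] by (simp add: fun_eq_iff)
  let ?ci = "if precedes n (int i) (int i + 1) w then 0 else vv^2 - 1"
    and ?cj = "if precedes n (int j) (int j + 1) w then 0 else vv^2 - 1"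
  have "Ts n i (Ts n j (bas w)) = (\<lambda>u. ?cj * (?ci * bas w u + vv * bas ?wi u)
      + vv * (?ci * bas ?wj u + vv * bas (map (swap_entry n (int i)) ?wj) u))"
    unfolding Ts_bas[OF j w(3,4)] linear_op_lincomb[OF linear_op_Ts finsupp_bas finsupp_bas]
      Ts_bas[OF i w(1,2)] Ts_bas[OF i wj] precedes_wj ..
  moreover have "Ts n j (Ts n i (bas w)) = (\<lambda>u. ?ci * (?cj * bas w u + vv * bas ?wj u)
      + vv * (?cj * bas ?wi u + vv * bas (map (swap_entry n (int j)) ?wi) u))"
    unfolding Ts_bas[OF i w(1,2)] linear_op_lincomb[OF linear_op_Ts finsupp_bas finsupp_bas]
      Ts_bas[OF j w(3,4)] Ts_bas[OF j wi] precedes_wi ..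
  ultimately show ?thesis
    by (simp add: swaps fun_eq_iff algebra_simps)
qed

lemma length_filter_residue_in_three:
  "distinct [a, b, c] \<Longrightarrow> length (filter (\<lambda>t. residue n t \<in> {a, b, c}) w) =
    length (filter (\<lambda>t. residue n t = a) w) + length (filter (\<lambda>t. residue n t = b) w)
    + length (filter (\<lambda>t. residue n t = c) w)"
  by (induction w) auto

lemma occurs_once_three_split:
  assumes "occurs_once n a w" "occurs_once n b w" "occurs_once n c w" "distinct [a, b, c]"
  obtains xs x ys y zs z us where "w = xs @ x # ys @ y # zs @ z # us"
    "avoids n {a, b, c} (xs @ ys @ zs @ us)"
    "residue n x \<in> {a, b, c}" "residue n y \<in> {a, b, c}" "residue n z \<in> {a, b, c}"
    "distinct [residue n x, residue n y, residue n z]"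
proof -
  let ?P = "\<lambda>t. residue n t \<in> {a, b, c}"
  have "length (filter ?P w) = 3"
    using assms length_filter_residue_in_three[OF assms(4), of n w] unfolding occurs_once_def by simp
  then obtain x y z where xyz: "filter ?P w = [x, y, z]"
    by (auto simp: numeral_3_eq_3 length_Suc_conv)
  from filter_eq_ConsD[OF xyz] obtain xs v where
    v: "w = xs @ x # v" "\<forall>t\<in>set xs. \<not> ?P t" "?P x" "[y, z] = filter ?P v"
    by blast
  from filter_eq_ConsD[OF v(4)[symmetric]] obtain ys v' where
    v': "v = ys @ y # v'" "\<forall>t\<in>set ys. \<not> ?P t" "?P y" "[z] = filter ?P v'"
    by blast
  from filter_eq_ConsD[OF v'(4)[symmetric]] obtain zs us where
    us: "v' = zs @ z # us" "\<forall>t\<in>set zs. \<not> ?P t" "?P z" "[] = filter ?P us"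
    by blast
  have w: "w = xs @ x # ys @ y # zs @ z # us"
    using v(1) v'(1) us(1) by simp
  have "length (filter (\<lambda>t. residue n t = e) [x, y, z]) = 1" if "e \<in> {a, b, c}" for e
  proof -
    have "filter (\<lambda>t. residue n t = e) [x, y, z] = filter (\<lambda>t. residue n t = e) w"
      unfolding xyz[symmetric] filter_filter using that by (intro filter_cong) auto
    then show ?thesis
      using assms that unfolding occurs_once_def by auto
  qed
  from this[of "residue n x"] this[of "residue n y"]
  have distinct: "distinct [residue n x, residue n y, residue n z]"
    using v(3) v'(3) by (auto split: if_splits)
  have avoids: "avoids n {a, b, c} (xs @ ys @ zs @ us)"
    using v(2) v'(2) us(2) us(4)[symmetric] unfolding avoids_def by (auto simp: filter_empty_conv)
  show thesis
    by (rule that[OF w avoids v(3) v'(3) us(3) distinct])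
qed

lemma Ts_braid_bas:
  fixes n i :: nat
  assumes i: "1 \<le> i" "i + 2 < n"
    and w: "occurs_once n (int i) w" "occurs_once n (int i + 1) w" "occurs_once n (int i + 2) w"
  shows "Ts n i (Ts n (i + 1) (Ts n i (bas w))) = Ts n (i + 1) (Ts n i (Ts n (i + 1) (bas w)))"
proof -
  define j where "j = i + 1"
  have i': "1 \<le> i" "i + 1 < n" "1 \<le> int i" "int i + 2 < int n" and j: "1 \<le> j" "j + 1 < n"
    using i unfolding j_def by simp_all
  have Tj: "Ts n j (bas L) =
      (\<lambda>u. (if precedes n (int i + 1) (int i + 2) L then 0 else vv^2 - 1) * bas L u
      + vv * bas (map (swap_entry n (int i + 1)) L) u)"
    if "occurs_once n (int i + 1) L" "occurs_once n (int i + 2) L" for L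
  proof -
    have "int j = int i + 1"
      unfolding j_def by simp
    then show ?thesis
      using Ts_bas[OF j, of L] that by (simp only: add.assoc one_add_one)
  qed
  have swap_i1: "swap_entry n (int i + 1) t =
      (if residue n t = int i + 1 then t + 1 else if residue n t = int i + 2 then t - 1 else t)" for t
    unfolding swap_entry_def by (simp add: add.assoc)
  have avoids_i1: "map (swap_entry n (int i + 1)) L = L"
    if "avoids n {int i + 1} L" "avoids n {int i + 2} L" for L
    using that map_swap_entry_avoids[of n "int i + 1" L] by (simp add: add.assoc)
  obtain xs x ys y zs z us where split: "w = xs @ x # ys @ y # zs @ z # us"
    "avoids n {int i, int i + 1, int i + 2} (xs @ ys @ zs @ us)"
    "residue n x \<in> {int i, int i + 1, int i + 2}" "residue n y \<in> {int i, int i + 1, int i + 2}"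
    "residue n z \<in> {int i, int i + 1, int i + 2}" "distinct [residue n x, residue n y, residue n z]"
    by (rule occurs_once_three_split[OF w]) simp
  have residue_add_left:
    "1 \<le> residue n t + c \<Longrightarrow> residue n t + c \<le> int n \<Longrightarrow> residue n (c + t) = residue n t + c"
    for t c
    using residue_add_eq[of n t c] by (simp add: add.commute)
  \<comment> \<open>one case for each relative order of \<open>x, y, z\<close>, in which both sides are evaluated by \<open>Ts_bas\<close>\<close>
  from split(3-6) split(2) i' show ?thesis
    unfolding split(1) j_def[symmetric]
    apply (elim insertE emptyE)
    apply (simp_all add: Tj Ts_bas[OF i'(1,2)] linear_op_lincomb[OF linear_op_Ts]
        linear_op_scale[OF linear_op_Ts]
        linear_op_add[OF linear_op_Ts] occurs_once_def filter_residue_avoids precedes_append_avoids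
        map_swap_entry_avoids avoids_i1 swap_i1 swap_entry_def
        residue_add_eq residue_add_left residue_diff_eq)
    apply (simp_all add: fun_eq_iff algebra_simps)
    done
qed


lemma omega_word_occurs_once: "omega_word n r w \<Longrightarrow> 1 \<le> c \<Longrightarrow> c \<le> int r \<Longrightarrow> occurs_once n c w"
  unfolding omega_word_def by simp

lemma Ts_omega_word_bas:
  assumes "omega_word n r w" "1 \<le> i" "i < r" "r < n"
  shows "Ts n i (bas w) = (\<lambda>u. (if precedes n (int i) (int i + 1) w then 0 else vv^2 - 1) * bas w u
      + vv * bas (map (swap_entry n (int i)) w) u)"
  using assms by (intro Ts_bas) (simp_all add: omega_word_occurs_once)

lemma omega_word_swap_entry:
  assumes "omega_word n r w" "1 \<le> i" "i < int r" "r < n"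
  shows "omega_word n r (map (swap_entry n i) w)"
  by (rule omega_word_map[where \<phi> = "\<lambda>c. if c = i then i + 1 else if c = i + 1 then i else c"])
    (use assms residue_swap_entry[of i n] in \<open>auto simp: inj_on_def\<close>)

context
  fixes n r :: nat
  assumes r: "1 \<le> r" "r < n"
begin

lemma rho_entry_swap_entry_rho_inv_entry:
  assumes i: "1 \<le> i" "i + 1 < int r" and t: "1 \<le> residue n t" "residue n t \<le> int r"
  shows "rho_entry n r (swap_entry n (i + 1) (rho_inv_entry n r t)) = swap_entry n i t"
proof (cases "residue n t \<in> {i, i + 1}")
  case True
  then have "rho_inv_entry n r t = t + 1" "residue n (t + 1) = residue n t + 1"
    using i r by (auto simp: rho_inv_entry_def residue_add_eq)
  moreover have "residue n (t + 1 + 1) = residue n t + 2" "residue n (t + 1 - 1) = residue n t"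
    using True i r by (auto simp: residue_add_eq add.assoc)
  ultimately show ?thesis
    using True i by (auto simp: swap_entry_def rho_entry_def)
next
  case False
  then have "swap_entry n (i + 1) (rho_inv_entry n r t) = rho_inv_entry n r t"
    using residue_rho_inv_entry[OF r t] i by (auto simp: swap_entry_def)
  then show ?thesis
    using False rho_entry_rho_inv_entry[OF r t] by (simp add: swap_entry_def)
qed

lemma Trho_Ts_Trhoinv_bas:
  fixes i :: nat
  assumes w: "omega_word n r w" and i: "1 \<le> i" "i + 1 < r"
  shows "Trho n r (Ts n (i + 1) (Trhoinv n r (bas w))) = Ts n i (bas w)"
proof -
  note bounds = omega_word_residue_bounds[OF w r(2)]
  let ?w1 = "map (rho_inv_entry n r) w"
  let ?w2 = "map (swap_entry n (int (i + 1))) ?w1"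
  have w1: "omega_word n r ?w1"
    by (rule omega_word_rho_inv[OF r w])
  have w2: "omega_word n r ?w2"
    using omega_word_swap_entry[OF w1, of "int (i + 1)"] i r by simp
  have precedes_w1: "precedes n (int (i + 1)) (int (i + 1) + 1) ?w1 = precedes n (int i) (int i + 1) w"
    by (rule precedes_map) (use bounds residue_rho_inv_entry[OF r] i in auto)
  have rho_w1: "map (rho_entry n r) ?w1 = w"
    using bounds rho_entry_rho_inv_entry[OF r] by (simp add: map_idI)
  have rho_w2: "map (rho_entry n r) ?w2 = map (swap_entry n (int i)) w"
    unfolding map_map comp_def of_nat_add of_nat_1
    by (rule map_cong[OF refl]) (use bounds rho_entry_swap_entry_rho_inv_entry[of "int i"] i in force)
  have "Ts n (i + 1) (Trhoinv n r (bas w)) =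
      (\<lambda>u. (if precedes n (int i) (int i + 1) w then 0 else vv^2 - 1)
      * bas ?w1 u + vv * bas ?w2 u)"
    unfolding Trhoinv_bas[OF r w] precedes_w1[symmetric]
    by (rule Ts_omega_word_bas[OF w1]) (use i r in auto)
  then have "Trho n r (Ts n (i + 1) (Trhoinv n r (bas w))) =
      (\<lambda>u. (if precedes n (int i) (int i + 1) w then 0 else vv^2 - 1) * bas w u
      + vv * bas (map (swap_entry n (int i)) w) u)"
    by (simp only: linear_op_lincomb[OF linear_op_Trho finsupp_bas finsupp_bas] Trho_bas[OF r w1]
        Trho_bas[OF r w2] rho_w1 rho_w2)
  also have "\<dots> = Ts n i (bas w)"
    by (rule Ts_omega_word_bas[OF w, symmetric]) (use i r in auto)
  finally show ?thesis .
qed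

lemma funpow_Trho_Ts_funpow_Trhoinv_bas:
  fixes i :: nat
  assumes w: "omega_word n r w" and i: "1 \<le> i" "i < r"
  shows "(Trho n r ^^ r) (Ts n i ((Trhoinv n r ^^ r) (bas w))) = Ts n i (bas w)"
proof -
  let ?shift = "map (\<lambda>t. t + int n)"
  let ?v = "map (swap_entry n (int i)) w"
  have v: "omega_word n r ?v"
    using omega_word_swap_entry[OF w, of "int i"] i r by simp
  have shift_w: "omega_word n r (?shift w)"
    by (rule omega_word_map[OF w r(2), where \<phi> = id]) (simp_all add: residue_add_n)
  have precedes_shift: "precedes n (int i) (int i + 1) (?shift w) = precedes n (int i) (int i + 1) w"
    by (rule precedes_map) (simp add: residue_add_n)
  have swap_shift: "map (swap_entry n (int i)) (?shift w) = ?shift ?v"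
    by (simp add: swap_entry_def residue_add_n)
  have "Ts n i ((Trhoinv n r ^^ r) (bas w)) =
      (\<lambda>u. (if precedes n (int i) (int i + 1) w then 0 else vv^2 - 1) * bas (?shift w) u
        + vv * bas (?shift ?v) u)"
    unfolding funpow_Trhoinv_r_bas[OF r w] precedes_shift[symmetric] swap_shift[symmetric]
    by (rule Ts_omega_word_bas[OF shift_w]) (use i r in auto)
  then have "(Trho n r ^^ r) (Ts n i ((Trhoinv n r ^^ r) (bas w))) =
      (\<lambda>u. (if precedes n (int i) (int i + 1) w then 0 else vv^2 - 1) * bas w u + vv * bas ?v u)"
    by (simp only: linear_op_lincomb[OF linear_op_funpow[OF linear_op_Trho] finsupp_bas finsupp_bas]
        funpow_Trho_r_bas[OF r w] funpow_Trho_r_bas[OF r v])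
  also have "\<dots> = Ts n i (bas w)"
    by (rule Ts_omega_word_bas[OF w, symmetric]) (use i r in auto)
  finally show ?thesis .
qed

end


section \<open>The relations on \<open>V\<^sub>\<omega>\<close>\<close>

lemma linear_op_intros:
  "linear_op (\<lambda>f. f)"
  "linear_op P \<Longrightarrow> linear_op Q \<Longrightarrow> linear_op (\<lambda>f u. a * P f u + b * Q f u)"
  "linear_op P \<Longrightarrow> linear_op (\<lambda>f. Ts n i (P f))"
  "linear_op P \<Longrightarrow> linear_op (\<lambda>f. Trho n r (P f))"
  "linear_op P \<Longrightarrow> linear_op (\<lambda>f. Trhoinv n r (P f))"
  "linear_op P \<Longrightarrow> linear_op Q \<Longrightarrow> linear_op (\<lambda>f. (Q ^^ k) (P f))"
  by (simp_all add: linear_op_id linear_op_lincomb_op linear_op_comp linear_op_Ts linear_op_Trho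
      linear_op_Trhoinv linear_op_funpow)

context
  fixes n r :: nat
  assumes r: "1 \<le> r" "r < n"
begin

lemma Vomega_Trho: "Vomega n r f \<Longrightarrow> Vomega n r (Trho n r f)"
  by (rule Vomega_closed[OF r(2) linear_op_Trho])
    (simp_all add: Trho_bas[OF r] Vomega_bas[OF r(2)] omega_word_rho[OF r])

lemma Vomega_Trhoinv: "Vomega n r f \<Longrightarrow> Vomega n r (Trhoinv n r f)"
  by (rule Vomega_closed[OF r(2) linear_op_Trhoinv])
    (simp_all add: Trhoinv_bas[OF r] Vomega_bas[OF r(2)] omega_word_rho_inv[OF r])

lemma Vomega_Ts: "1 \<le> i \<Longrightarrow> i < r \<Longrightarrow> Vomega n r f \<Longrightarrow> Vomega n r (Ts n i f)"
  by (rule Vomega_closed[OF r(2) linear_op_Ts])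
    (simp_all add: Ts_omega_word_bas r Vomega_lincomb Vomega_bas omega_word_swap_entry)

lemma Trho_Trhoinv:
  assumes "Vomega n r f"
  shows "Trho n r (Trhoinv n r f) = f"
proof (rule Vomega_eq_on_basis[OF r(2) _ _ assms])
  fix w assume w: "omega_word n r w"
  then show "Trho n r (Trhoinv n r (bas w)) = bas w"
    using rho_entry_rho_inv_entry[OF r] omega_word_residue_bounds[OF w r(2)]
    by (simp add: Trhoinv_bas[OF r] Trho_bas[OF r] omega_word_rho_inv[OF r] map_idI)
qed (auto intro!: linear_op_intros)

lemma Trhoinv_Trho:
  assumes "Vomega n r f"
  shows "Trhoinv n r (Trho n r f) = f"
proof (rule Vomega_eq_on_basis[OF r(2) _ _ assms])
  fix w assume w: "omega_word n r w"
  then show "Trhoinv n r (Trho n r (bas w)) = bas w"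
    using rho_inv_entry_rho_entry[OF r] omega_word_residue_bounds[OF w r(2)]
    by (simp add: Trhoinv_bas[OF r] Trho_bas[OF r] omega_word_rho[OF r] map_idI)
qed (auto intro!: linear_op_intros)

lemma Ts_quadratic:
  assumes "1 \<le> i" "i < r" "Vomega n r f"
  shows "Ts n i (Ts n i f) = (\<lambda>u. (vv^2 - 1) * Ts n i f u + vv^2 * f u)"
proof (rule Vomega_eq_on_basis[OF r(2) _ _ assms(3)])
  fix w assume "omega_word n r w"
  then show "Ts n i (Ts n i (bas w)) = (\<lambda>u. (vv^2 - 1) * Ts n i (bas w) u + vv^2 * bas w u)"
    using assms r by (intro Ts_quadratic_bas) (simp_all add: omega_word_occurs_once)
qed (auto intro!: linear_op_intros)

lemma Ts_commute:
  assumes "1 \<le> i" "i < r" "1 \<le> j" "j < r" "\<bar>int i - int j\<bar> > 1" "Vomega n r f"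
  shows "Ts n i (Ts n j f) = Ts n j (Ts n i f)"
proof (rule Vomega_eq_on_basis[OF r(2) _ _ assms(6)])
  fix w assume "omega_word n r w"
  then show "Ts n i (Ts n j (bas w)) = Ts n j (Ts n i (bas w))"
    using assms r by (intro Ts_commute_bas) (simp_all add: omega_word_occurs_once)
qed (auto intro!: linear_op_intros)

lemma Ts_braid:
  assumes "1 \<le> i" "i + 1 < r" "Vomega n r f"
  shows "Ts n i (Ts n (i + 1) (Ts n i f)) = Ts n (i + 1) (Ts n i (Ts n (i + 1) f))"
proof (rule Vomega_eq_on_basis[OF r(2) _ _ assms(3)])
  fix w assume "omega_word n r w"
  then show "Ts n i (Ts n (i + 1) (Ts n i (bas w))) = Ts n (i + 1) (Ts n i (Ts n (i + 1) (bas w)))"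
    using assms r by (intro Ts_braid_bas) (simp_all add: omega_word_occurs_once)
qed (auto intro!: linear_op_intros)

lemma Trho_Ts_Trhoinv:
  assumes "1 \<le> i" "i + 1 < r" "Vomega n r f"
  shows "Trho n r (Ts n (i + 1) (Trhoinv n r f)) = Ts n i f"
proof (rule Vomega_eq_on_basis[OF r(2) _ _ assms(3)])
  fix w assume "omega_word n r w"
  then show "Trho n r (Ts n (i + 1) (Trhoinv n r (bas w))) = Ts n i (bas w)"
    using assms by (intro Trho_Ts_Trhoinv_bas[OF r])
qed (auto intro!: linear_op_intros)

lemma funpow_Trho_Ts_funpow_Trhoinv:
  assumes "1 \<le> i" "i < r" "Vomega n r f"
  shows "(Trho n r ^^ r) (Ts n i ((Trhoinv n r ^^ r) f)) = Ts n i f"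
proof (rule Vomega_eq_on_basis[OF r(2) _ _ assms(3)])
  fix w assume "omega_word n r w"
  then show "(Trho n r ^^ r) (Ts n i ((Trhoinv n r ^^ r) (bas w))) = Ts n i (bas w)"
    using assms by (intro funpow_Trho_Ts_funpow_Trhoinv_bas[OF r])
qed (auto intro!: linear_op_intros)

end

theorem proposition2p1p7:
  fixes n r :: nat
  assumes "r \<ge> 3" and "n > r"
  shows "(\<forall>f. Vomega n r f \<longrightarrow>
            Vomega n r (Trho n r f) \<and> Vomega n r (Trhoinv n r f) \<and>
            (\<forall>i\<in>{1..<r}. Vomega n r (Ts n i f)))
       \<and> (\<forall>f. Vomega n r f \<longrightarrow> Trho n r (Trhoinv n r f) = f \<and> Trhoinv n r (Trho n r f) = f)
       \<and> (\<forall>i\<in>{1..<r}. \<forall>f. Vomega n r f \<longrightarrow>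
            Ts n i (Ts n i f) = (\<lambda>u. (vv^2 - 1) * Ts n i f u + vv^2 * f u))
       \<and> (\<forall>i\<in>{1..<r}. \<forall>j\<in>{1..<r}. \<bar>int i - int j\<bar> > 1 \<longrightarrow> (\<forall>f. Vomega n r f \<longrightarrow>
            Ts n i (Ts n j f) = Ts n j (Ts n i f)))
       \<and> (\<forall>i\<in>{1..<r}. \<forall>j\<in>{1..<r}. \<bar>int i - int j\<bar> = 1 \<longrightarrow> (\<forall>f. Vomega n r f \<longrightarrow>
            Ts n i (Ts n j (Ts n i f)) = Ts n j (Ts n i (Ts n j f))))
       \<and> (\<forall>i. 1 \<le> i \<and> i < r - 1 \<longrightarrow> (\<forall>f. Vomega n r f \<longrightarrow>
            Trho n r (Ts n (i + 1) (Trhoinv n r f)) = Ts n i f))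
       \<and> (\<forall>i\<in>{1..<r}. \<forall>f. Vomega n r f \<longrightarrow>
            (Trho n r ^^ r) (Ts n i ((Trhoinv n r ^^ r) f)) = Ts n i f)"
proof -
  have r: "1 \<le> r" "r < n"
    using assms by simp_all
  have braid: "Ts n i (Ts n j (Ts n i f)) = Ts n j (Ts n i (Ts n j f))"
    if ij: "i \<in> {1..<r}" "j \<in> {1..<r}" "\<bar>int i - int j\<bar> = 1" and f: "Vomega n r f" for i j f
  proof -
    consider "j = i + 1" | "i = j + 1"
      using ij(3) by linarith
    then show ?thesis
      by cases (use ij Ts_braid[OF r _ _ f] in auto)
  qed
  show ?thesis
    using Vomega_Trho[OF r] Vomega_Trhoinv[OF r] Vomega_Ts[OF r] Trho_Trhoinv[OF r] Trhoinv_Trho[OF r]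
      Ts_quadratic[OF r] Ts_commute[OF r] braid Trho_Ts_Trhoinv[OF r]
      funpow_Trho_Ts_funpow_Trhoinv[OF r]
    by auto
qed


end
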